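(* For every $m\times n$ XOR non-local game $G$ there are non-negative constants $c_1,\dots,c_m$ such that for every $0\le\epsilon<1/(4(m+n))$ and every $\epsilon$-optimal vector strategy $\{u_i\},\{v_j\}$ for $G$, $$\Bigl\|\sum_jG_{ij}v_j-c_iu_i\Bigr\|\le\sqrt{10}\,(m+n)^{1/4}\epsilon^{1/4}\qquad(1\le i\le m).$$ In particular, for every optimal vector strategy $\sum_jG_{ij}v_j=c_iu_i$ and $\sum_jG_{ij}u_i\cdot v_j=c_i$. If $G$ has no zero rows then all $c_i$ are strictly positive.
   Context: An $m\times n$ XOR non-local game has real cost matrix $G=(G_{ij})$ with $\sum|G_{ij}|=1$. A vector strategy for $G$ is a pair of families of unit vectors $u_1,\dots,u_m$, $v_1,\dots,v_n$ in some $\mathbb{R}^N$, with bias $\sum_{i,j}G_{ij}u_i\cdot v_j$. The quantum success bias $\varepsilon_q(G)$ equals the maximum bias over all vector strategies; a vector strategy is $\epsilon$-optimal if its bias is at least $\varepsilon_q(G)-\epsilon$, and optimal if $\epsilon=0$. *)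

theory Defs
  imports Complex_Main
begin

text \<open>Vectors in R^N are represented as functions nat => real, only coordinates k < N matter.
  The dimension N is arbitrary (it varies over all naturals), so it is an explicit parameter.\<close>

definition ip :: "nat \<Rightarrow> (nat \<Rightarrow> real) \<Rightarrow> (nat \<Rightarrow> real) \<Rightarrow> real" where
  "ip N x y = (\<Sum>k<N. x k * y k)"

definition vnorm :: "nat \<Rightarrow> (nat \<Rightarrow> real) \<Rightarrow> real" where
  "vnorm N x = sqrt (ip N x x)"

definition xor_game :: "nat \<Rightarrow> nat \<Rightarrow> (nat \<Rightarrow> nat \<Rightarrow> real) \<Rightarrow> bool" where
  "xor_game m n G \<longleftrightarrow> (\<Sum>i<m. \<Sum>j<n. \<bar>G i j\<bar>) = 1"

definition vec_strategy :: "nat \<Rightarrow> nat \<Rightarrow> nat \<Rightarrow> (nat \<Rightarrow> nat \<Rightarrow> real) \<Rightarrow> (nat \<Rightarrow> nat \<Rightarrow> real) \<Rightarrow> bool" where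
  "vec_strategy m n N u v \<longleftrightarrow> (\<forall>i<m. vnorm N (u i) = 1) \<and> (\<forall>j<n. vnorm N (v j) = 1)"

definition bias :: "nat \<Rightarrow> nat \<Rightarrow> nat \<Rightarrow> (nat \<Rightarrow> nat \<Rightarrow> real) \<Rightarrow> (nat \<Rightarrow> nat \<Rightarrow> real) \<Rightarrow> (nat \<Rightarrow> nat \<Rightarrow> real) \<Rightarrow> real" where
  "bias m n N G u v = (\<Sum>i<m. \<Sum>j<n. G i j * ip N (u i) (v j))"

definition eps_q :: "nat \<Rightarrow> nat \<Rightarrow> (nat \<Rightarrow> nat \<Rightarrow> real) \<Rightarrow> real" where
  "eps_q m n G = Sup {bias m n N G u v | N u v. vec_strategy m n N u v}"

definition eps_optimal :: "nat \<Rightarrow> nat \<Rightarrow> (nat \<Rightarrow> nat \<Rightarrow> real) \<Rightarrow> real \<Rightarrow> nat \<Rightarrow> (nat \<Rightarrow> nat \<Rightarrow> real) \<Rightarrow> (nat \<Rightarrow> nat \<Rightarrow> real) \<Rightarrow> bool" where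
  "eps_optimal m n G \<epsilon> N u v \<longleftrightarrow> vec_strategy m n N u v \<and> bias m n N G u v \<ge> eps_q m n G - \<epsilon>"

end

theory Submission
  imports Defs "HOL-Analysis.Convex"
begin

text \<open>
  Write \<open>w\<^sub>i = \<Sum>\<^sub>j G\<^sub>i\<^sub>j v\<^sub>j\<close> for the row vectors of Bob's strategy, so that the bias is
  \<open>\<Sum>\<^sub>i \<langle>u\<^sub>i, w\<^sub>i\<rangle>\<close> and the gap of a strategy is \<open>\<epsilon>\<^sub>q - bias \<ge> 0\<close>.  The argument combines
  strategies by direct sums:
  \<^item> Alice's best response shows \<open>\<Sum>\<^sub>i \<parallel>w\<^sub>i\<parallel> \<le> \<epsilon>\<^sub>q\<close>, hence each row loses at most the gap,
    \<open>\<parallel>w\<^sub>i\<parallel> - \<langle>u\<^sub>i, w\<^sub>i\<rangle> \<le> gap\<close>;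
  \<^item> averaging two strategies shows that their row norms differ by at most
    \<open>2\<surd>(gap\<^sub>1 + gap\<^sub>2)\<close>; so \<open>c\<^sub>i = inf (\<parallel>w\<^sub>i\<parallel> + 2\<surd>gap)\<close> satisfies \<open>\<bar>\<parallel>w\<^sub>i\<parallel> - c\<^sub>i\<bar> \<le> 2\<surd>gap\<close>;
  \<^item> expanding \<open>\<parallel>w\<^sub>i - c\<^sub>i u\<^sub>i\<parallel>\<^sup>2\<close> then gives the bound \<open>6 \<cdot> gap\<close>, which is stronger than the
    stated \<open>\<surd>10 (m+n)\<^sup>1\<^sup>/\<^sup>4 \<epsilon>\<^sup>1\<^sup>/\<^sup>4\<close>, and for optimal strategies it forces \<open>w\<^sub>i = c\<^sub>i u\<^sub>i\<close>;
  \<^item> if \<open>c\<^sub>i = 0\<close> for a non-zero row, moving \<open>u\<^sub>i\<close> to a fresh coordinate where Bob plays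
    the signs of row \<open>i\<close> would beat \<open>\<epsilon>\<^sub>q\<close>.
\<close>

lemma ip_self_nonneg: "0 \<le> ip N x x"
  unfolding ip_def by (auto intro: sum_nonneg)

lemma vnorm_nonneg: "0 \<le> vnorm N x"
  unfolding vnorm_def using ip_self_nonneg[of N x] by simp

lemma vnorm_square: "(vnorm N x)\<^sup>2 = ip N x x"
  unfolding vnorm_def using ip_self_nonneg[of N x] by simp

lemma ip_self_unit: "vnorm N x = 1 \<Longrightarrow> ip N x x = 1"
  using vnorm_square by (metis one_power2)

lemma ip_abs_le: "\<bar>ip N x y\<bar> \<le> vnorm N x * vnorm N y"
proof -
  have "(ip N x y)\<^sup>2 \<le> ip N x x * ip N y y"
    using Cauchy_Schwarz_ineq_sum[of x y "{..<N}"] unfolding ip_def by (simp add: power2_eq_square)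
  hence "sqrt ((ip N x y)\<^sup>2) \<le> sqrt (ip N x x * ip N y y)" by (rule real_sqrt_le_mono)
  thus ?thesis unfolding vnorm_def by (simp add: real_sqrt_mult)
qed

lemma ip_unit_le_vnorm: "vnorm N x = 1 \<Longrightarrow> ip N x y \<le> vnorm N y"
  using ip_abs_le[of N x y] by simp

lemma vnorm_eq_0_coord:
  assumes "vnorm N x = 0" and "k < N" shows "x k = 0"
proof -
  have "(\<Sum>k<N. x k * x k) = 0"
    using assms(1) vnorm_square[of N x] unfolding ip_def by simp
  hence "\<forall>k\<in>{..<N}. x k * x k = 0"
    by (subst sum_nonneg_eq_0_iff[symmetric]) auto
  thus ?thesis using assms(2) by simp
qed

lemma ip_cong_right: "(\<And>k. k < N \<Longrightarrow> y k = y' k) \<Longrightarrow> ip N x y = ip N x y'"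
  unfolding ip_def by (intro sum.cong) auto

lemma ip_scale_right: "ip N x (\<lambda>k. c * y k) = c * ip N x y"
  unfolding ip_def by (simp add: sum_distrib_left mult_ac)

lemma ip_diff_scaled:
  "ip N (\<lambda>k. x k - c * y k) (\<lambda>k. x k - c * y k) = ip N x x - 2 * c * ip N y x + c\<^sup>2 * ip N y y"
  unfolding ip_def
  by (simp add: algebra_simps power2_eq_square sum.distrib sum_subtractf sum_distrib_left)

lemma normalize_vector:
  assumes "0 < vnorm N x"
  shows "vnorm N (\<lambda>k. x k / vnorm N x) = 1" and "ip N (\<lambda>k. x k / vnorm N x) x = vnorm N x"
proof -
  have sq: "ip N x x = (vnorm N x)\<^sup>2" by (simp add: vnorm_square)
  have "ip N (\<lambda>k. x k / vnorm N x) (\<lambda>k. x k / vnorm N x) = ip N x x / (vnorm N x)\<^sup>2"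
    unfolding ip_def by (simp add: sum_divide_distrib power2_eq_square)
  thus "vnorm N (\<lambda>k. x k / vnorm N x) = 1" using assms sq unfolding vnorm_def by simp
  have "ip N (\<lambda>k. x k / vnorm N x) x = ip N x x / vnorm N x"
    unfolding ip_def by (simp add: sum_divide_distrib)
  thus "ip N (\<lambda>k. x k / vnorm N x) x = vnorm N x"
    using assms sq by (simp add: power2_eq_square)
qed

definition dsum :: "nat \<Rightarrow> real \<Rightarrow> (nat \<Rightarrow> real) \<Rightarrow> real \<Rightarrow> (nat \<Rightarrow> real) \<Rightarrow> nat \<Rightarrow> real" where
  "dsum N1 a x b y = (\<lambda>t. if t < N1 then a * x t else b * y (t - N1))"

lemma sum_lessThan_add:
  "(\<Sum>t<N1 + N2. f t) = (\<Sum>t<N1. f t) + (\<Sum>t<N2. f (N1 + t))" for f :: "nat \<Rightarrow> real"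
  by (induct N2) auto

lemma ip_dsum:
  "ip (N1 + N2) (dsum N1 a x b y) (dsum N1 a' x' b' y') = a * a' * ip N1 x x' + b * b' * ip N2 y y'"
  unfolding ip_def dsum_def sum_lessThan_add by (simp add: sum_distrib_left mult_ac)

lemma ip_dsum_Suc:
  "ip (Suc N) (dsum N a x b y) (dsum N a' x' b' y') = a * a' * ip N x x' + b * b' * (y 0 * y' 0)"
  using ip_dsum[of N 1] by (simp add: ip_def)

definition rowvec :: "nat \<Rightarrow> (nat \<Rightarrow> nat \<Rightarrow> real) \<Rightarrow> nat \<Rightarrow> (nat \<Rightarrow> nat \<Rightarrow> real) \<Rightarrow> nat \<Rightarrow> real" where
  "rowvec n G i v = (\<lambda>k. \<Sum>j<n. G i j * v j k)"

lemma ip_rowvec: "(\<Sum>j<n. G i j * ip N x (v j)) = ip N x (rowvec n G i v)"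
  unfolding ip_def rowvec_def
  by (simp add: sum_distrib_left sum_distrib_right mult_ac sum.swap[of _ "{..<N}"])

lemma bias_rows: "bias m n N G u v = (\<Sum>i<m. ip N (u i) (rowvec n G i v))"
  unfolding bias_def using ip_rowvec by simp

lemma rowvec_dsum:
  "rowvec n G i (\<lambda>j. dsum N1 a (v j) b (v' j)) = dsum N1 a (rowvec n G i v) b (rowvec n G i v')"
  unfolding rowvec_def dsum_def by (auto simp: sum_distrib_left mult_ac)

subsection \<open>Three ways of building new strategies\<close>

lemma best_response:
  assumes S: "vec_strategy m n N u v"
  shows "\<exists>u'. vec_strategy m n N u' v \<and> bias m n N G u' v = (\<Sum>i<m. vnorm N (rowvec n G i v))"
proof -
  define u' where "u' i = (if 0 < vnorm N (rowvec n G i v)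
      then (\<lambda>k. rowvec n G i v k / vnorm N (rowvec n G i v)) else u i)" for i
  have unit: "vnorm N (u' i) = 1" if "i < m" for i
    using S that normalize_vector(1) unfolding u'_def vec_strategy_def by auto
  have attain: "ip N (u' i) (rowvec n G i v) = vnorm N (rowvec n G i v)" if "i < m" for i
  proof (cases "0 < vnorm N (rowvec n G i v)")
    case True
    thus ?thesis unfolding u'_def using normalize_vector(2) by simp
  next
    case False
    hence "vnorm N (rowvec n G i v) = 0" using vnorm_nonneg[of N "rowvec n G i v"] by linarith
    thus ?thesis using False ip_abs_le[of N "u i" "rowvec n G i v"] unfolding u'_def by simp
  qed
  have "vec_strategy m n N u' v" using S unit unfolding vec_strategy_def by simp
  moreover have "bias m n N G u' v = (\<Sum>i<m. vnorm N (rowvec n G i v))"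
    unfolding bias_rows using attain by simp
  ultimately show ?thesis by blast
qed

lemma average_strategies:
  assumes S1: "vec_strategy m n N1 u1 v1" and S2: "vec_strategy m n N2 u2 v2"
  shows "\<exists>N u v. vec_strategy m n N u v \<and> (\<forall>i. vnorm N (rowvec n G i v)
           = sqrt (((vnorm N1 (rowvec n G i v1))\<^sup>2 + (vnorm N2 (rowvec n G i v2))\<^sup>2) / 2))"
proof -
  define h :: real where "h = 1 / sqrt 2"
  have hh: "h * h = 1/2" unfolding h_def by (simp add: real_sqrt_mult[symmetric])
  define u where "u i = dsum N1 h (u1 i) h (u2 i)" for i
  define v where "v j = dsum N1 h (v1 j) h (v2 j)" for j
  have "vec_strategy m n (N1 + N2) u v"
    using S1 S2 unfolding vec_strategy_def u_def v_def vnorm_def ip_dsum hh by simp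
  moreover have "vnorm (N1 + N2) (rowvec n G i v)
      = sqrt (((vnorm N1 (rowvec n G i v1))\<^sup>2 + (vnorm N2 (rowvec n G i v2))\<^sup>2) / 2)" for i
    unfolding v_def rowvec_dsum vnorm_square by (simp add: vnorm_def ip_dsum hh field_simps)
  ultimately show ?thesis by blast
qed

text \<open>Boosting row \<open>i\<close>: Alice moves \<open>u\<^sub>i\<close> to a fresh coordinate, on which Bob plays the
  signs of row \<open>i\<close> with weight \<open>t\<close>.\<close>
lemma boost_row:
  assumes S: "vec_strategy m n N u v" and i: "i < m" and t: "0 \<le> t" "t \<le> 1"
  shows "\<exists>u' v'. vec_strategy m n (N + 1) u' v' \<and> bias m n (N + 1) G u' v'
           = sqrt (1 - t\<^sup>2) * (bias m n N G u v - ip N (u i) (rowvec n G i v))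
             + t * (\<Sum>j<n. \<bar>G i j\<bar>)"
proof -
  define s where "s = sqrt (1 - t\<^sup>2)"
  have ss: "s * s = 1 - t\<^sup>2" unfolding s_def using t by (simp add: power_le_one)
  define sg where "sg j = (if 0 \<le> G i j then 1 else -1 :: real)" for j
  define u' where "u' k = (if k = i then dsum N 0 (u k) 1 (\<lambda>_. 1) else dsum N 1 (u k) 0 (\<lambda>_. 1))" for k
  define v' where "v' j = dsum N s (v j) t (\<lambda>_. sg j)" for j
  have "vec_strategy m n (N + 1) u' v'"
    using S ss unfolding vec_strategy_def vnorm_def u'_def v'_def sg_def
    by (auto simp: ip_dsum_Suc ip_self_unit power2_eq_square)
  moreover
  have row: "(\<Sum>j<n. G k j * ip (N + 1) (u' k) (v' j))
      = (if k = i then t * (\<Sum>j<n. \<bar>G i j\<bar>) else s * ip N (u k) (rowvec n G k v))" for k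
    unfolding ip_rowvec[symmetric]
    by (auto simp: u'_def v'_def sg_def ip_dsum_Suc sum_distrib_left mult_ac abs_if intro!: sum.cong)
  have "bias m n (N + 1) G u' v'
      = t * (\<Sum>j<n. \<bar>G i j\<bar>) + s * (\<Sum>k\<in>{..<m} - {i}. ip N (u k) (rowvec n G k v))"
    unfolding bias_def row using i by (simp add: sum.remove sum_distrib_left)
  moreover have "bias m n N G u v = ip N (u i) (rowvec n G i v)
      + (\<Sum>k\<in>{..<m} - {i}. ip N (u k) (rowvec n G k v))"
    unfolding bias_rows using i by (simp add: sum.remove)
  ultimately show ?thesis unfolding s_def by (metis add.commute add_diff_cancel_left')
qed

lemma am_le_qm: "(a + c) / 2 \<le> sqrt ((a\<^sup>2 + c\<^sup>2) / 2)" for a c :: real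
proof (rule real_le_rsqrt)
  show "((a + c) / 2)\<^sup>2 \<le> (a\<^sup>2 + c\<^sup>2) / 2"
    using sum_squares_ge_zero[of "a - c" 0] by (simp add: power2_eq_square field_simps)
qed

lemma square_diff_le_qm_am_gap:
  fixes a c :: real assumes a: "0 \<le> a" "a \<le> 1" and c: "0 \<le> c" "c \<le> 1"
  shows "(a - c)\<^sup>2 \<le> 8 * (sqrt ((a\<^sup>2 + c\<^sup>2) / 2) - (a + c) / 2)"
proof -
  define s where "s = sqrt ((a\<^sup>2 + c\<^sup>2) / 2)"
  have am: "(a + c) / 2 \<le> s" unfolding s_def by (rule am_le_qm)
  have "a\<^sup>2 \<le> 1" "c\<^sup>2 \<le> 1" using a c by (auto intro: power_le_one)
  hence s1: "s \<le> 1" unfolding s_def by simp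
  have "s\<^sup>2 = (a\<^sup>2 + c\<^sup>2) / 2" unfolding s_def by simp
  hence "(a - c)\<^sup>2 = 4 * (s\<^sup>2 - ((a + c) / 2)\<^sup>2)"
    by (simp add: power2_eq_square field_simps)
  also have "\<dots> = 4 * ((s - (a + c) / 2) * (s + (a + c) / 2))"
    by (simp add: power2_eq_square algebra_simps)
  also have "\<dots> \<le> 4 * ((s - (a + c) / 2) * 2)"
  proof -
    have "s + (a + c) / 2 \<le> 2" "0 \<le> s - (a + c) / 2" using am s1 a c by linarith+
    hence "(s - (a + c) / 2) * (s + (a + c) / 2) \<le> (s - (a + c) / 2) * 2"
      by (intro mult_left_mono)
    thus ?thesis by linarith
  qed
  finally show ?thesis unfolding s_def by simp
qed

lemma damping_loss:
  fixes B t :: real assumes t: "0 \<le> t" "t \<le> 1" and B: "B \<le> 1"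
  shows "B - t\<^sup>2 \<le> sqrt (1 - t\<^sup>2) * B"
proof (cases "0 \<le> B")
  case True
  have t2: "0 \<le> 1 - t\<^sup>2" "1 - t\<^sup>2 \<le> 1" using t by (auto simp: power_le_one)
  have "(1 - t\<^sup>2)\<^sup>2 \<le> 1 - t\<^sup>2" using mult_left_le[OF t2(2) t2(1)] by (simp add: power2_eq_square)
  hence "1 - t\<^sup>2 \<le> sqrt (1 - t\<^sup>2)" by (rule real_le_rsqrt)
  hence "(1 - t\<^sup>2) * B \<le> sqrt (1 - t\<^sup>2) * B" using True by (rule mult_right_mono)
  moreover have "t\<^sup>2 * B \<le> t\<^sup>2" using B True by (simp add: mult_left_le)
  ultimately show ?thesis by (simp add: algebra_simps)
next
  case False
  have "sqrt (1 - t\<^sup>2) \<le> 1" using t by simp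
  hence "1 * B \<le> sqrt (1 - t\<^sup>2) * B" using False by (intro mult_right_mono_neg) auto
  thus ?thesis using zero_le_power2[of t] by linarith
qed

lemma sqrt_6_eps_le:
  fixes e M :: real assumes e: "0 \<le> e" "e \<le> 1" and M: "1 \<le> M"
  shows "sqrt (6 * e) \<le> sqrt 10 * M powr (1/4) * e powr (1/4)"
proof -
  define E where "E = e powr (1/4)"
  have EE: "E * E = sqrt e" unfolding E_def
    using powr_add[of e "1/4" "1/4", symmetric] powr_half_sqrt[OF e(1)] by simp
  have E1: "E \<le> 1" unfolding E_def using powr_mono2[of "1/4" e 1] e by simp
  have E0: "0 \<le> E" unfolding E_def by simp
  have M1: "1 \<le> M powr (1/4)" using powr_mono2[of "1/4" 1 M] M by simp
  have "sqrt (6 * e) = sqrt 6 * (E * E)" using EE by (simp add: real_sqrt_mult)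
  also have "\<dots> \<le> sqrt 6 * E" using E0 E1 by (simp add: mult_left_le)
  also have "\<dots> \<le> sqrt 10 * E" using E0 by (intro mult_right_mono) auto
  also have "\<dots> \<le> sqrt 10 * (M powr (1/4) * E)" using E0 M1
    by (intro mult_left_mono) (auto simp: mult_le_cancel_right1)
  finally show ?thesis unfolding E_def by (simp add: mult_ac)
qed

subsection \<open>Near-optimal strategies of a fixed XOR game\<close>

context
  fixes m n :: nat and G :: "nat \<Rightarrow> nat \<Rightarrow> real"
  assumes game: "xor_game m n G"
begin

abbreviation strategy :: "nat \<Rightarrow> (nat \<Rightarrow> nat \<Rightarrow> real) \<Rightarrow> (nat \<Rightarrow> nat \<Rightarrow> real) \<Rightarrow> bool" where
  "strategy N u v \<equiv> vec_strategy m n N u v"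

abbreviation gap :: "nat \<Rightarrow> (nat \<Rightarrow> nat \<Rightarrow> real) \<Rightarrow> (nat \<Rightarrow> nat \<Rightarrow> real) \<Rightarrow> real" where
  "gap N u v \<equiv> eps_q m n G - bias m n N G u v"

text \<open>Since \<open>\<Sum>\<bar>G\<^sub>i\<^sub>j\<bar> = 1\<close> and inner products of unit vectors lie in \<open>[-1,1]\<close>, all biases
  are at most 1; hence \<open>\<epsilon>\<^sub>q\<close> is a finite supremum, approached by strategies of arbitrarily small gap.\<close>
lemma bias_le_one:
  assumes "strategy N u v" shows "bias m n N G u v \<le> 1"
proof -
  have "G i j * ip N (u i) (v j) \<le> \<bar>G i j\<bar>" if "i < m" "j < n" for i j
  proof -
    have "\<bar>ip N (u i) (v j)\<bar> \<le> 1"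
      using ip_abs_le[of N "u i" "v j"] assms that unfolding vec_strategy_def by simp
    hence "\<bar>G i j\<bar> * \<bar>ip N (u i) (v j)\<bar> \<le> \<bar>G i j\<bar>" by (simp add: mult_left_le)
    thus ?thesis by (metis abs_ge_self abs_mult order_trans)
  qed
  hence "bias m n N G u v \<le> (\<Sum>i<m. \<Sum>j<n. \<bar>G i j\<bar>)"
    unfolding bias_def by (intro sum_mono) auto
  thus ?thesis using game unfolding xor_game_def by simp
qed

lemma some_strategy: "strategy 1 (\<lambda>i t. 1) (\<lambda>j t. 1)"
  unfolding vec_strategy_def vnorm_def ip_def by simp

lemma biases_bdd_above: "bdd_above {bias m n N G u v | N u v. strategy N u v}"
  using bias_le_one by (auto intro!: bdd_aboveI[where M=1])

lemma bias_le_eps_q: "strategy N u v \<Longrightarrow> bias m n N G u v \<le> eps_q m n G"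
  unfolding eps_q_def by (rule cSup_upper[OF _ biases_bdd_above]) blast

lemma gap_nonneg: "strategy N u v \<Longrightarrow> 0 \<le> gap N u v"
  using bias_le_eps_q by simp

lemma eps_q_le_one: "eps_q m n G \<le> 1"
  unfolding eps_q_def using some_strategy by (intro cSup_least) (auto intro: bias_le_one)

lemma exists_near_optimal:
  assumes "0 < \<delta>" shows "\<exists>N u v. strategy N u v \<and> gap N u v < \<delta>"
proof -
  have "eps_q m n G - \<delta> < Sup {bias m n N G u v | N u v. strategy N u v}"
    using assms unfolding eps_q_def by simp
  then obtain N u v where "strategy N u v" "eps_q m n G - \<delta> < bias m n N G u v"
    using less_cSup_iff[OF _ biases_bdd_above] some_strategy by blast
  thus ?thesis by (intro exI[of _ N] exI[of _ u] exI[of _ v]) auto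
qed

text \<open>By Alice's best response, the row norms of any strategy sum to at most \<open>\<epsilon>\<^sub>q\<close>.\<close>
lemma sum_row_norms_le:
  "strategy N u v \<Longrightarrow> (\<Sum>i<m. vnorm N (rowvec n G i v)) \<le> eps_q m n G"
  using best_response[of m n N u v G] gap_nonneg by force

lemma row_norm_le_one:
  assumes "strategy N u v" and "i < m" shows "vnorm N (rowvec n G i v) \<le> 1"
proof -
  have "vnorm N (rowvec n G i v) \<le> (\<Sum>i<m. vnorm N (rowvec n G i v))"
    using assms(2) by (intro member_le_sum) (auto simp: vnorm_nonneg)
  thus ?thesis using sum_row_norms_le[OF assms(1)] eps_q_le_one by linarith
qed

lemma row_loss_nonneg:
  "strategy N u v \<Longrightarrow> i < m \<Longrightarrow> 0 \<le> vnorm N (rowvec n G i v) - ip N (u i) (rowvec n G i v)"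
  using ip_unit_le_vnorm unfolding vec_strategy_def by (simp add: ip_unit_le_vnorm)

lemma bias_le_sum_row_norms:
  "strategy N u v \<Longrightarrow> bias m n N G u v \<le> (\<Sum>i<m. vnorm N (rowvec n G i v))"
  unfolding bias_rows using row_loss_nonneg by (intro sum_mono) force

lemma row_loss_le_gap:
  assumes S: "strategy N u v" and i: "i < m"
  shows "vnorm N (rowvec n G i v) - ip N (u i) (rowvec n G i v) \<le> gap N u v"
proof -
  have "vnorm N (rowvec n G i v) - ip N (u i) (rowvec n G i v)
      \<le> (\<Sum>k<m. vnorm N (rowvec n G k v) - ip N (u k) (rowvec n G k v))"
    using i row_loss_nonneg[OF S] by (intro member_le_sum) auto
  also have "\<dots> = (\<Sum>k<m. vnorm N (rowvec n G k v)) - bias m n N G u v"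
    unfolding bias_rows by (simp add: sum_subtractf)
  finally show ?thesis using sum_row_norms_le[OF S] by linarith
qed

text \<open>Averaging them gives a strategy whose row norms are quadratic means; since these sum
  to at most \<open>\<epsilon>\<^sub>q\<close>, the quadratic means exceed the arithmetic means by little in total.\<close>
lemma row_norms_close:
  assumes S1: "strategy N1 u1 v1" and S2: "strategy N2 u2 v2" and i: "i < m"
  shows "(vnorm N1 (rowvec n G i v1) - vnorm N2 (rowvec n G i v2))\<^sup>2 \<le> 4 * (gap N1 u1 v1 + gap N2 u2 v2)"
proof -
  define a where "a k = vnorm N1 (rowvec n G k v1)" for k
  define c where "c k = vnorm N2 (rowvec n G k v2)" for k
  define excess where "excess k = sqrt (((a k)\<^sup>2 + (c k)\<^sup>2) / 2) - (a k + c k) / 2" for k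
  obtain N u v where S: "strategy N u v"
    and qm: "\<And>k. vnorm N (rowvec n G k v) = sqrt (((a k)\<^sup>2 + (c k)\<^sup>2) / 2)"
    using average_strategies[OF S1 S2, of G] unfolding a_def c_def by blast
  have "(\<Sum>k<m. sqrt (((a k)\<^sup>2 + (c k)\<^sup>2) / 2)) \<le> eps_q m n G"
    using sum_row_norms_le[OF S] qm by simp
  moreover have "bias m n N1 G u1 v1 \<le> (\<Sum>k<m. a k)" "bias m n N2 G u2 v2 \<le> (\<Sum>k<m. c k)"
    using bias_le_sum_row_norms[OF S1] bias_le_sum_row_norms[OF S2] unfolding a_def c_def .
  moreover have "(\<Sum>k<m. excess k)
      = (\<Sum>k<m. sqrt (((a k)\<^sup>2 + (c k)\<^sup>2) / 2)) - ((\<Sum>k<m. a k) + (\<Sum>k<m. c k)) / 2"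
    unfolding excess_def by (simp add: sum_subtractf sum.distrib sum_divide_distrib[symmetric])
  ultimately have total: "(\<Sum>k<m. excess k) \<le> (gap N1 u1 v1 + gap N2 u2 v2) / 2"
    by (simp add: field_simps)
  have "excess i \<le> (\<Sum>k<m. excess k)"
    using i am_le_qm unfolding excess_def by (intro member_le_sum) auto
  moreover have "(a i - c i)\<^sup>2 \<le> 8 * excess i"
    unfolding excess_def using row_norm_le_one[OF S1 i] row_norm_le_one[OF S2 i]
    by (intro square_diff_le_qm_am_gap) (auto simp: a_def c_def vnorm_nonneg)
  ultimately show ?thesis using total unfolding a_def c_def by linarith
qed

text \<open>The constant \<open>c\<^sub>i\<close>: the value that \<open>\<parallel>w\<^sub>i\<parallel>\<close> approaches along near-optimal strategies,
  obtained as an infimum of upper bounds \<open>\<parallel>w\<^sub>i\<parallel> + 2\<surd>gap\<close>.\<close>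
definition opt_row_norm :: "nat \<Rightarrow> real" where
  "opt_row_norm i = Inf {vnorm N (rowvec n G i v) + 2 * sqrt (gap N u v) | N u v. strategy N u v}"

lemma opt_row_norm_le:
  assumes "strategy N u v" shows "opt_row_norm i \<le> vnorm N (rowvec n G i v) + 2 * sqrt (gap N u v)"
  unfolding opt_row_norm_def
proof (rule cInf_lower)
  show "bdd_below {vnorm N (rowvec n G i v) + 2 * sqrt (gap N u v) | N u v. strategy N u v}"
    by (rule bdd_belowI[where m=0]) (auto intro!: add_nonneg_nonneg vnorm_nonneg simp: bias_le_eps_q)
qed (use assms in blast)

lemma opt_row_norm_nonneg: "0 \<le> opt_row_norm i"
  unfolding opt_row_norm_def using some_strategy
  by (intro cInf_greatest) (auto intro!: add_nonneg_nonneg vnorm_nonneg simp: bias_le_eps_q)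

lemma opt_row_norm_ge:
  assumes S: "strategy N u v" and i: "i < m"
  shows "vnorm N (rowvec n G i v) - 2 * sqrt (gap N u v) \<le> opt_row_norm i"
  unfolding opt_row_norm_def
proof (rule cInf_greatest)
  fix x assume "x \<in> {vnorm N (rowvec n G i v) + 2 * sqrt (gap N u v) | N u v. strategy N u v}"
  then obtain N' u' v' where S': "strategy N' u' v'"
    and x: "x = vnorm N' (rowvec n G i v') + 2 * sqrt (gap N' u' v')" by blast
  have "\<bar>vnorm N (rowvec n G i v) - vnorm N' (rowvec n G i v')\<bar> \<le> sqrt (4 * (gap N u v + gap N' u' v'))"
    using real_sqrt_le_mono[OF row_norms_close[OF S S' i]] by simp
  also have "\<dots> = 2 * sqrt (gap N u v + gap N' u' v')"
    by (subst real_sqrt_mult) simp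
  also have "\<dots> \<le> 2 * sqrt (gap N u v) + 2 * sqrt (gap N' u' v')"
    using sqrt_add_le_add_sqrt[OF gap_nonneg[OF S] gap_nonneg[OF S']] by linarith
  finally show "vnorm N (rowvec n G i v) - 2 * sqrt (gap N u v) \<le> x" unfolding x by linarith
qed (use some_strategy in blast)

lemma row_norm_near_opt:
  assumes "strategy N u v" and "i < m"
  shows "\<bar>vnorm N (rowvec n G i v) - opt_row_norm i\<bar> \<le> 2 * sqrt (gap N u v)"
  using opt_row_norm_le[OF assms(1), of i] opt_row_norm_ge[OF assms] unfolding abs_le_iff by linarith

lemma opt_row_norm_le_one:
  assumes i: "i < m" shows "opt_row_norm i \<le> 1"
proof (rule field_le_epsilon)
  fix d :: real assume d: "0 < d"
  obtain N u v where S: "strategy N u v" and "gap N u v < (d/2)\<^sup>2"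
    using exists_near_optimal[of "(d/2)\<^sup>2"] d by auto
  hence "sqrt (gap N u v) \<le> d/2" using d real_sqrt_le_mono[of "gap N u v" "(d/2)\<^sup>2"] by simp
  thus "opt_row_norm i \<le> 1 + d" using opt_row_norm_le[OF S, of i] row_norm_le_one[OF S i] by linarith
qed

text \<open>Robust alignment: if the gap is at most \<open>e\<close>, then \<open>\<parallel>w\<^sub>i - c\<^sub>i u\<^sub>i\<parallel>\<^sup>2 \<le> 6e\<close>, from
  \<open>\<parallel>w\<^sub>i - c\<^sub>i u\<^sub>i\<parallel>\<^sup>2 = \<parallel>w\<^sub>i\<parallel>\<^sup>2 - 2c\<^sub>i\<langle>u\<^sub>i,w\<^sub>i\<rangle> + c\<^sub>i\<^sup>2 \<le> (\<parallel>w\<^sub>i\<parallel> - c\<^sub>i)\<^sup>2 + 2c\<^sub>i e\<close>.\<close>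
lemma row_alignment:
  assumes S: "strategy N u v" and i: "i < m" and gap: "gap N u v \<le> e"
  shows "vnorm N (\<lambda>k. rowvec n G i v k - opt_row_norm i * u i k) \<le> sqrt (6 * e)"
proof -
  let ?w = "rowvec n G i v" and ?c = "opt_row_norm i"
  have e: "0 \<le> e" using gap gap_nonneg[OF S] by linarith
  have "\<bar>vnorm N ?w - ?c\<bar> \<le> 2 * sqrt e"
    using row_norm_near_opt[OF S i] real_sqrt_le_mono[OF gap] by linarith
  hence "(vnorm N ?w - ?c)\<^sup>2 \<le> (2 * sqrt e)\<^sup>2"
    by (metis abs_ge_zero order_trans power2_abs power_mono)
  hence close: "(vnorm N ?w - ?c)\<^sup>2 \<le> 4 * e" using e by (simp add: power_mult_distrib)
  have loss: "vnorm N ?w - ip N (u i) ?w \<le> e" using row_loss_le_gap[OF S i] gap by linarith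
  have unit: "ip N (u i) (u i) = 1" using S i unfolding vec_strategy_def by (simp add: ip_self_unit)
  have "ip N (\<lambda>k. ?w k - ?c * u i k) (\<lambda>k. ?w k - ?c * u i k) = (vnorm N ?w)\<^sup>2 - 2 * ?c * ip N (u i) ?w + ?c\<^sup>2"
    using ip_diff_scaled[of N ?w ?c "u i"] unit by (simp add: vnorm_square)
  also have "\<dots> \<le> (vnorm N ?w)\<^sup>2 - 2 * ?c * (vnorm N ?w - e) + ?c\<^sup>2"
    using loss opt_row_norm_nonneg[of i] by (simp add: mult_left_mono)
  also have "\<dots> = (vnorm N ?w - ?c)\<^sup>2 + 2 * ?c * e" by (simp add: power2_eq_square algebra_simps)
  also have "\<dots> \<le> 4 * e + 2 * 1 * e"
    using close opt_row_norm_le_one[OF i] e by (intro add_mono mult_right_mono) auto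
  finally show ?thesis unfolding vnorm_def by (intro real_sqrt_le_mono) simp
qed

lemma exact_alignment:
  assumes S: "strategy N u v" and opt: "gap N u v \<le> 0" and i: "i < m"
  shows "\<forall>k<N. rowvec n G i v k = opt_row_norm i * u i k"
    and "ip N (u i) (rowvec n G i v) = opt_row_norm i"
proof -
  have "vnorm N (\<lambda>k. rowvec n G i v k - opt_row_norm i * u i k) = 0"
    using row_alignment[OF S i opt] vnorm_nonneg[of N] by (simp add: order_antisym)
  thus aligned: "\<forall>k<N. rowvec n G i v k = opt_row_norm i * u i k"
    using vnorm_eq_0_coord by fastforce
  have "ip N (u i) (rowvec n G i v) = opt_row_norm i * ip N (u i) (u i)"
    using ip_cong_right[of N "rowvec n G i v" "\<lambda>k. opt_row_norm i * u i k" "u i"] aligned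
    by (simp add: ip_scale_right)
  thus "ip N (u i) (rowvec n G i v) = opt_row_norm i"
    using S i unfolding vec_strategy_def by (simp add: ip_self_unit)
qed

text \<open>Otherwise a near-optimal strategy has
  \<open>w\<^sub>i \<approx> 0\<close>, so row \<open>i\<close> contributes almost nothing, and boosting row \<open>i\<close> with weight
  \<open>t = r/2\<close>, \<open>r = \<Sum>\<^sub>j \<bar>G\<^sub>i\<^sub>j\<bar>\<close>, gains about \<open>r\<^sup>2/4\<close>, which would exceed \<open>\<epsilon>\<^sub>q\<close>.\<close>
lemma opt_row_norm_pos:
  assumes i: "i < m" and nonzero: "\<exists>j<n. G i j \<noteq> 0" shows "0 < opt_row_norm i"
proof (rule ccontr)
  assume "\<not> 0 < opt_row_norm i"
  hence c0: "opt_row_norm i = 0" using opt_row_norm_nonneg[of i] by linarith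
  define r where "r = (\<Sum>j<n. \<bar>G i j\<bar>)"
  have r0: "0 < r" unfolding r_def using nonzero by (auto intro: sum_pos2)
  have "r \<le> (\<Sum>k<m. \<Sum>j<n. \<bar>G k j\<bar>)" unfolding r_def using i
    by (intro member_le_sum[where f="\<lambda>k. \<Sum>j<n. \<bar>G k j\<bar>"]) (auto intro: sum_nonneg)
  hence r1: "r \<le> 1" using game unfolding xor_game_def by simp
  define d where "d = r\<^sup>2 / 16"
  have d0: "0 < d" unfolding d_def using r0 by simp
  obtain N u v where S: "strategy N u v" and near: "gap N u v < d\<^sup>2"
    using exists_near_optimal[of "d\<^sup>2"] d0 by auto
  have "sqrt (gap N u v) \<le> d" using real_sqrt_le_mono[of _ "d\<^sup>2"] near d0 by simp
  hence small: "vnorm N (rowvec n G i v) \<le> 2 * d" using row_norm_near_opt[OF S i] c0 by simp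
  define B where "B = bias m n N G u v - ip N (u i) (rowvec n G i v)"
  have "ip N (u i) (rowvec n G i v) \<le> vnorm N (rowvec n G i v)"
    using row_loss_nonneg[OF S i] by linarith
  hence B_low: "eps_q m n G - d\<^sup>2 - 2 * d < B" unfolding B_def using near small by linarith
  obtain u0 v0 where "strategy (N + 1) u0 v0" "bias m n (N + 1) G u0 v0 = B"
    using boost_row[OF S i, where t=0 and G=G] unfolding B_def by auto
  hence B1: "B \<le> 1" using bias_le_eps_q eps_q_le_one by fastforce
  obtain u' v' where S': "strategy (N + 1) u' v'"
    and boosted: "bias m n (N + 1) G u' v' = sqrt (1 - (r/2)\<^sup>2) * B + r/2 * r"
    using boost_row[OF S i, where t="r/2" and G=G] r0 r1 unfolding B_def r_def by auto
  have "B - (r/2)\<^sup>2 \<le> sqrt (1 - (r/2)\<^sup>2) * B" using r0 r1 B1 by (intro damping_loss) auto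
  moreover have "d\<^sup>2 \<le> r\<^sup>2 / 256"
    using r0 r1 power_mono[of r 1 2] unfolding d_def by (simp add: power2_eq_square field_simps)
  moreover have "(r/2)\<^sup>2 = r\<^sup>2 / 4" "r/2 * r = r\<^sup>2 / 2" by (simp_all add: power2_eq_square)
  moreover have "0 < r\<^sup>2" using r0 by simp
  ultimately have "eps_q m n G < bias m n (N + 1) G u' v'"
    using boosted B_low d_def by linarith
  thus False using bias_le_eps_q[OF S'] by linarith
qed

text \<open>The quantitative statement of the theorem for \<open>\<epsilon>\<close>-optimal strategies: in the range
  \<open>\<epsilon> < 1/(4(m+n)) \<le> 1\<close> the bound \<open>\<surd>(6\<epsilon>)\<close> implies the stated one.\<close>
lemma eps_optimal_alignment:
  assumes opt: "eps_optimal m n G \<epsilon> N u v" and i: "i < m"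
    and e0: "0 \<le> \<epsilon>" and small: "\<epsilon> < 1 / (4 * (real m + real n))"
  shows "vnorm N (\<lambda>k. rowvec n G i v k - opt_row_norm i * u i k)
           \<le> sqrt 10 * (real m + real n) powr (1/4) * \<epsilon> powr (1/4)"
proof -
  have S: "strategy N u v" and gap: "gap N u v \<le> \<epsilon>"
    using opt unfolding eps_optimal_def by auto
  have size: "1 \<le> real m + real n" using i by simp
  hence "1 / (4 * (real m + real n)) \<le> 1" by simp
  hence e1: "\<epsilon> \<le> 1" using small by linarith
  have "vnorm N (\<lambda>k. rowvec n G i v k - opt_row_norm i * u i k) \<le> sqrt (6 * \<epsilon>)"
    by (rule row_alignment[OF S i gap])
  also have "\<dots> \<le> sqrt 10 * (real m + real n) powr (1/4) * \<epsilon> powr (1/4)"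
    by (rule sqrt_6_eps_le[OF e0 e1 size])
  finally show ?thesis .
qed

end

theorem theorem3p1:
  fixes m n :: nat and G :: "nat \<Rightarrow> nat \<Rightarrow> real"
  assumes "xor_game m n G"
  shows "\<exists>c :: nat \<Rightarrow> real. (\<forall>i<m. c i \<ge> 0)
    \<and> (\<forall>\<epsilon> N u v. 0 \<le> \<epsilon> \<longrightarrow> \<epsilon> < 1 / (4 * (real m + real n)) \<longrightarrow> eps_optimal m n G \<epsilon> N u v \<longrightarrow>
          (\<forall>i<m. vnorm N (\<lambda>k. (\<Sum>j<n. G i j * v j k) - c i * u i k)
                   \<le> sqrt 10 * (real m + real n) powr (1/4) * \<epsilon> powr (1/4)))
    \<and> (\<forall>N u v. eps_optimal m n G 0 N u v \<longrightarrow>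
          (\<forall>i<m. (\<forall>k<N. (\<Sum>j<n. G i j * v j k) = c i * u i k)
                 \<and> (\<Sum>j<n. G i j * ip N (u i) (v j)) = c i))
    \<and> ((\<forall>i<m. \<exists>j<n. G i j \<noteq> 0) \<longrightarrow> (\<forall>i<m. c i > 0))"
proof (intro exI[of _ "opt_row_norm m n G"] conjI allI impI)
  show "0 \<le> opt_row_norm m n G i" for i
    using opt_row_norm_nonneg[OF assms] .
  show "opt_row_norm m n G i > 0" if "\<forall>i<m. \<exists>j<n. G i j \<noteq> 0" and "i < m" for i
    using opt_row_norm_pos[OF assms] that by blast
  show "vnorm N (\<lambda>k. (\<Sum>j<n. G i j * v j k) - opt_row_norm m n G i * u i k)
      \<le> sqrt 10 * (real m + real n) powr (1/4) * \<epsilon> powr (1/4)"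
    if "0 \<le> \<epsilon>" "\<epsilon> < 1 / (4 * (real m + real n))" "eps_optimal m n G \<epsilon> N u v" "i < m"
    for \<epsilon> N u v i
    using eps_optimal_alignment[OF assms that(3,4,1,2)] unfolding rowvec_def .
next
  fix N u v i assume "eps_optimal m n G 0 N u v" and i: "i < m"
  hence S: "vec_strategy m n N u v" and opt: "eps_q m n G - bias m n N G u v \<le> 0"
    unfolding eps_optimal_def by auto
  show "(\<Sum>j<n. G i j * v j k) = opt_row_norm m n G i * u i k" if "k < N" for k
    using exact_alignment(1)[OF assms S opt i] that unfolding rowvec_def by blast
  show "(\<Sum>j<n. G i j * ip N (u i) (v j)) = opt_row_norm m n G i"
    using exact_alignment(2)[OF assms S opt i] unfolding ip_rowvec .
qed

end
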